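(* Let $G=(V,E)$ be a finite simple undirected graph with zipper constraint collection $\mathcal{Z}$, let $D\subseteq Z^2$, and let $\mathbb{S}\subseteq D$ be a prescription on $D$. Suppose $\mathcal{K}=\{K_1,\dots,K_m\}$ is a clique cover of $G$ that is faithful to $\mathbb{S}$. Then the collection $\mathcal{K}^+=\{\mathrm{expand}(K):K\in\mathcal{K}\}$ is a clique cover of the augmented graph $G^+(\mathbb{S})$.
   Context: A clique cover of a graph is a collection of cliques whose union is the whole vertex set. A zipper constraint collection for $G$ is a finite set $\mathcal{Z}=\{(U_1,W_1,y_1),\dots,(U_m,W_m,y_m)\}$, where each $U_i,W_i\in E$ is an edge (a 2-element subset of $V$) and each $y_i$ is a label. Let $Z^2=\{U_1,\dots,U_m,W_1,\dots,W_m\}$. A prescription on $D\subseteq Z^2$ is a subset $\mathbb{S}\subseteq D$; the elements of $D\setminus\mathbb{S}$ are off pairs. A clique cover $\mathcal{K}$ of $G$ is faithful to $\mathbb{S}$ if (1) every $P\in\mathbb{S}$ is contained in some clique of $\mathcal{K}$, and (2) no $P\in D\setminus\mathbb{S}$ is contained in any clique of $\mathcal{K}$. Let $G'=(V,E\setminus(D\setminus\mathbb{S}))$. The augmented graph $G^+(\mathbb{S})=(V^+,E^+)$ has vertex set $V^+=\{[u]:u\in V\}\cup\{[u,w]:\{u,w\}\in\mathbb{S}\}$. Each vertex $[A]$ is a new formal vertex labeled by $A$, which is a singleton or a pair. Two distinct vertices $[A],[B]$ are adjacent if and only if $A\cup B$ is a clique in $G'$. For $T\subseteq V$, its expansion is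 $\mathrm{expand}(T)=\{[A]\in V^+ : A\subseteq T\}$. *)

theory Defs
  imports Main
begin

definition simple_graph :: "'a set \<Rightarrow> 'a set set \<Rightarrow> bool" where
  "simple_graph V E \<longleftrightarrow> finite V \<and> (\<forall>e\<in>E. e \<subseteq> V \<and> card e = 2)"

definition zipper_collection :: "'a set set \<Rightarrow> ('a set \<times> 'a set \<times> 'l) set \<Rightarrow> bool" where
  "zipper_collection E Z \<longleftrightarrow> finite Z \<and> (\<forall>(U,W,y)\<in>Z. U \<in> E \<and> W \<in> E)"

definition Z2 :: "('a set \<times> 'a set \<times> 'l) set \<Rightarrow> 'a set set" where
  "Z2 Z = (\<lambda>(U,W,y). U) ` Z \<union> (\<lambda>(U,W,y). W) ` Z"

definition is_clique :: "'a set \<Rightarrow> 'a set set \<Rightarrow> 'a set \<Rightarrow> bool" where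
  "is_clique V E K \<longleftrightarrow> K \<subseteq> V \<and> (\<forall>x\<in>K. \<forall>y\<in>K. x \<noteq> y \<longrightarrow> {x, y} \<in> E)"

definition clique_cover :: "'a set \<Rightarrow> 'a set set \<Rightarrow> 'a set set \<Rightarrow> bool" where
  "clique_cover V E \<K> \<longleftrightarrow> (\<forall>K\<in>\<K>. is_clique V E K) \<and> \<Union>\<K> = V"

definition faithful :: "'a set set \<Rightarrow> 'a set set \<Rightarrow> 'a set set \<Rightarrow> bool" where
  "faithful D S \<K> \<longleftrightarrow> (\<forall>P\<in>S. \<exists>K\<in>\<K>. P \<subseteq> K) \<and> (\<forall>P\<in>D - S. \<forall>K\<in>\<K>. \<not> P \<subseteq> K)"

definition reduced_edges :: "'a set set \<Rightarrow> 'a set set \<Rightarrow> 'a set set \<Rightarrow> 'a set set" where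
  "reduced_edges E D S = E - (D - S)"

text \<open>Augmented graph: the formal vertex [A] is represented by its label A (a singleton or a pair).\<close>
definition aug_vertices :: "'a set \<Rightarrow> 'a set set \<Rightarrow> 'a set set" where
  "aug_vertices V S = (\<lambda>u. {u}) ` V \<union> S"

definition aug_edges :: "'a set \<Rightarrow> 'a set set \<Rightarrow> 'a set set \<Rightarrow> 'a set set \<Rightarrow> 'a set set set" where
  "aug_edges V E D S = {{A, B} | A B. A \<in> aug_vertices V S \<and> B \<in> aug_vertices V S \<and> A \<noteq> B
       \<and> is_clique V (reduced_edges E D S) (A \<union> B)}"

definition expand :: "'a set \<Rightarrow> 'a set set \<Rightarrow> 'a set \<Rightarrow> 'a set set" where
  "expand V S T = {A \<in> aug_vertices V S. A \<subseteq> T}"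

end

theory Submission
  imports Defs
begin

text \<open>A clique of \<open>G\<close> that contains no off pair is a clique of \<open>G'\<close>, and any two labels
  inside a clique of \<open>G'\<close> have their union inside it, hence are adjacent in \<open>G\<^sup>+(S)\<close>; so
  every \<open>expand K\<close> is a clique. Singletons are covered because \<open>\<K>\<close> covers \<open>V\<close>, and
  prescribed pairs because of condition (1) of faithfulness.\<close>

lemma is_clique_subset:
  assumes "is_clique V E K" and "T \<subseteq> K"
  shows "is_clique V E T"
  using assms unfolding is_clique_def by blast

lemma is_clique_reduced_edges:
  assumes "is_clique V E K" and "\<forall>P\<in>D - S. \<not> P \<subseteq> K"
  shows "is_clique V (reduced_edges E D S) K"
  unfolding is_clique_def reduced_edges_def
proof (intro conjI ballI impI)
  show "K \<subseteq> V" using assms(1) by (simp add: is_clique_def)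
next
  fix x y assume "x \<in> K" "y \<in> K" "x \<noteq> y"
  then have "{x, y} \<in> E" and "{x, y} \<subseteq> K"
    using assms(1) by (auto simp: is_clique_def)
  then show "{x, y} \<in> E - (D - S)" using assms(2) by blast
qed

lemma expand_subset_aug_vertices: "expand V S T \<subseteq> aug_vertices V S"
  by (auto simp: expand_def)

lemma is_clique_expand:
  assumes "is_clique V (reduced_edges E D S) K"
  shows "is_clique (aug_vertices V S) (aug_edges V E D S) (expand V S K)"
  unfolding is_clique_def
proof (intro conjI ballI impI)
  show "expand V S K \<subseteq> aug_vertices V S" by (rule expand_subset_aug_vertices)
next
  fix A B assume A: "A \<in> expand V S K" and B: "B \<in> expand V S K" and "A \<noteq> B"
  then have "is_clique V (reduced_edges E D S) (A \<union> B)"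
    using assms is_clique_subset by (fastforce simp: expand_def)
  then show "{A, B} \<in> aug_edges V E D S"
    using A B \<open>A \<noteq> B\<close> unfolding aug_edges_def expand_def by blast
qed

lemma Union_expand_eq_aug_vertices:
  assumes "\<Union>\<K> = V" and "\<forall>P\<in>S. \<exists>K\<in>\<K>. P \<subseteq> K"
  shows "\<Union>(expand V S ` \<K>) = aug_vertices V S"
proof
  show "\<Union>(expand V S ` \<K>) \<subseteq> aug_vertices V S"
    using expand_subset_aug_vertices by blast
next
  show "aug_vertices V S \<subseteq> \<Union>(expand V S ` \<K>)"
  proof
    fix A assume A: "A \<in> aug_vertices V S"
    have "\<exists>K\<in>\<K>. A \<subseteq> K"
      using A assms unfolding aug_vertices_def by blast
    then show "A \<in> \<Union>(expand V S ` \<K>)" using A by (auto simp: expand_def)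
  qed
qed

theorem mainTheorem3:
  fixes V :: "'a set" and E :: "'a set set" and Z :: "('a set \<times> 'a set \<times> 'l) set"
    and D S :: "'a set set" and \<K> :: "'a set set"
  assumes "simple_graph V E"
    and "zipper_collection E Z"
    and "D \<subseteq> Z2 Z"
    and "S \<subseteq> D"
    and "finite \<K>"
    and "clique_cover V E \<K>"
    and "faithful D S \<K>"
  shows "clique_cover (aug_vertices V S) (aug_edges V E D S) (expand V S ` \<K>)"
proof -
  have cliques: "\<forall>K\<in>\<K>. is_clique V E K" and covers: "\<Union>\<K> = V"
    using assms(6) by (auto simp: clique_cover_def)
  have prescribed: "\<forall>P\<in>S. \<exists>K\<in>\<K>. P \<subseteq> K" and off: "\<forall>P\<in>D - S. \<forall>K\<in>\<K>. \<not> P \<subseteq> K"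
    using assms(7) by (auto simp: faithful_def)
  have "is_clique (aug_vertices V S) (aug_edges V E D S) (expand V S K)" if "K \<in> \<K>" for K
    using that cliques off by (blast intro: is_clique_expand is_clique_reduced_edges)
  moreover have "\<Union>(expand V S ` \<K>) = aug_vertices V S"
    using covers prescribed by (rule Union_expand_eq_aug_vertices)
  ultimately show ?thesis unfolding clique_cover_def by blast
qed

end
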